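(* Let $\Omega$ be a non-empty bounded open subset of $\mathbf{R}^n$ and let $f:\Omega\to\mathbf{R}^n$ be a $C^1$ function. Then at least one of the following holds: (e1) $f$ satisfies the convex hull-like property in $\Omega$; (e2) there exists a non-empty open set $X\subseteq\Omega$ with $\overline{X}\subseteq\Omega$ such that for every continuous function $g:\Omega\to\mathbf{R}^n$ which is $C^1$ in $X$, there exists $\tilde\lambda\ge0$ such that for each $\lambda>\tilde\lambda$ one has $\det(J_{g+\lambda f}(\hat x))=0$ for some $\hat x\in X$.
   Context: $\det(J_h(x))$ denotes the Jacobian determinant of a $C^1$ map $h$ at $x$. A function $\psi:\mathbf{R}^n\to\mathbf{R}$ is quasi-convex if for each $r\in\mathbf{R}$ the set $\psi^{-1}(]-\infty,r])$ is convex. A continuous function $f:\Omega\to\mathbf{R}^n$ satisfies the convex hull-like property in $\Omega$ if for every continuous quasi-convex $\psi:\mathbf{R}^n\to\mathbf{R}$ there exists $x^*\in\partial\Omega$ such that $\limsup_{x\to x^*,\,x\in\Omega}\psi(f(x))=\sup_{x\in\Omega}\psi(f(x))$. *)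

theory Defs
  imports "HOL-Analysis.Analysis"
begin

definition C1_on :: "('a::real_normed_vector \<Rightarrow> 'b::real_normed_vector) \<Rightarrow> 'a set \<Rightarrow> bool" where
  "C1_on f S \<longleftrightarrow> (\<exists>f' :: 'a \<Rightarrow> 'a \<Rightarrow>\<^sub>L 'b.
       (\<forall>x\<in>S. (f has_derivative blinfun_apply (f' x)) (at x)) \<and> continuous_on S f')"

definition jacobian_det :: "(real^'n \<Rightarrow> real^'n) \<Rightarrow> real^'n \<Rightarrow> real" where
  "jacobian_det h x = det (matrix (frechet_derivative h (at x)))"

definition quasi_convex :: "('a::real_vector \<Rightarrow> real) \<Rightarrow> bool" where
  "quasi_convex \<psi> \<longleftrightarrow> (\<forall>r. convex {y. \<psi> y \<le> r})"

definition convex_hull_like :: "(real^'n \<Rightarrow> real^'n) \<Rightarrow> (real^'n) set \<Rightarrow> bool" where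
  "convex_hull_like f \<Omega> \<longleftrightarrow>
     (\<forall>\<psi> :: real^'n \<Rightarrow> real. continuous_on UNIV \<psi> \<and> quasi_convex \<psi> \<longrightarrow>
        (\<exists>xs\<in>frontier \<Omega>.
           Limsup (at xs within \<Omega>) (\<lambda>x. ereal (\<psi> (f x))) = (SUP x\<in>\<Omega>. ereal (\<psi> (f x)))))"

end

theory Submission
  imports Defs
begin

text \<open>If the convex hull-like property fails, some continuous quasi-convex \<open>\<psi>\<close> has,
  at every frontier point, a limsup of \<open>\<psi> \<circ> f\<close> below its supremum over \<open>\<Omega>\<close>. By
  compactness of the frontier a single level \<open>r\<close> below the supremum works uniformly, so
  \<open>X = {\<psi> \<circ> f > r}\<close> is compactly contained in \<open>\<Omega>\<close>, with \<open>\<psi> \<circ> f \<le> r\<close> on the frontier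
  of \<open>X\<close> and \<open>\<psi> \<circ> f > r\<close> somewhere inside. If the Jacobian of \<open>g + \<lambda> f\<close> never vanished
  on \<open>X\<close>, then \<open>h = f + g / \<lambda>\<close> would map \<open>X\<close> onto an open set whose frontier lies in
  \<open>h\<close> of the frontier of \<open>X\<close>. For large \<open>\<lambda>\<close> the map \<open>h\<close> is uniformly close to \<open>f\<close>, so \<open>\<psi>\<close>
  would be nearly \<open>\<le> r\<close> on the frontier of \<open>h(X)\<close> but nearly \<open>> r\<close> inside it, which is
  impossible: on a bounded open set a quasi-convex function is dominated by its values
  on the frontier.\<close>

lemma C1_on_imp_differentiable:
  assumes "C1_on f S" "x \<in> S"
  shows "f differentiable at x"
  using assms by (auto simp: C1_on_def differentiable_def)

lemma ray_meets_frontier: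
  fixes V :: "'a::real_normed_vector set"
  assumes "open V" "bounded V" "y \<in> V" "e \<noteq> 0"
  obtains a where "a > 0" "y + a *\<^sub>R e \<in> frontier V"
proof -
  obtain R where R: "\<forall>v\<in>V. norm v \<le> R" using assms(2) bounded_iff by blast
  define t where "t = (R + norm y + 1) / norm e"
  have "R \<ge> 0" using R assms(3) norm_ge_zero order.trans by metis
  then have "t > 0" using assms(4) unfolding t_def by (simp add: add_nonneg_pos)
  have "norm (t *\<^sub>R e) \<le> norm (y + t *\<^sub>R e) + norm y"
    using norm_triangle_ineq4[of "y + t *\<^sub>R e" y] by simp
  moreover have "norm (t *\<^sub>R e) = R + norm y + 1"
    using \<open>R \<ge> 0\<close> assms(4) by (simp add: t_def)
  ultimately have "y + t *\<^sub>R e \<notin> V" using R by force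
  then have "closed_segment y (y + t *\<^sub>R e) \<inter> frontier V \<noteq> {}"
    using assms(3) by (intro connected_Int_frontier) auto
  then obtain u where u: "0 \<le> u" "u \<le> 1" "y + (u * t) *\<^sub>R e \<in> frontier V"
    by (auto simp: in_segment algebra_simps)
  moreover have "y \<notin> frontier V"
    using assms(1,3) by (simp add: frontier_def interior_open)
  ultimately have "u * t \<noteq> 0" by auto
  with u \<open>t > 0\<close> show thesis by (intro that[of "u * t"]) (auto simp: less_le)
qed

text \<open>The line through \<open>y\<close> leaves \<open>V\<close> at two frontier points, and \<open>y\<close> is a convex
  combination of them.\<close>
lemma quasi_convex_less_on_frontier:
  fixes V :: "'a::euclidean_space set"
  assumes "open V" "bounded V" "y \<in> V" "quasi_convex \<psi>" "\<forall>p\<in>frontier V. \<psi> p < c"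
  shows "\<psi> y < c"
proof -
  obtain e :: 'a where "e \<in> Basis" using nonempty_Basis by blast
  then have "e \<noteq> 0" by auto
  obtain a where a: "a > 0" "y + a *\<^sub>R e \<in> frontier V"
    using ray_meets_frontier[OF assms(1-3) \<open>e \<noteq> 0\<close>] by blast
  obtain b where b: "b > 0" "y + b *\<^sub>R (-e) \<in> frontier V"
    using ray_meets_frontier[OF assms(1-3), of "-e"] \<open>e \<noteq> 0\<close> by auto
  define m where "m = max (\<psi> (y + a *\<^sub>R e)) (\<psi> (y + b *\<^sub>R (-e)))"
  have "convex {z. \<psi> z \<le> m}" using assms(4) by (simp add: quasi_convex_def)
  then have "(b/(a+b)) *\<^sub>R (y + a *\<^sub>R e) + (a/(a+b)) *\<^sub>R (y + b *\<^sub>R (-e)) \<in> {z. \<psi> z \<le> m}"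
    using a b by (intro convexD) (auto simp: m_def add_divide_distrib[symmetric])
  moreover have "(b/(a+b)) *\<^sub>R (y + a *\<^sub>R e) + (a/(a+b)) *\<^sub>R (y + b *\<^sub>R (-e)) = y"
    using a b by (simp add: algebra_simps add_divide_distrib[symmetric] scaleR_add_left[symmetric])
  ultimately have "\<psi> y \<le> m" by simp
  moreover have "m < c" using assms(5) a b by (simp add: m_def)
  ultimately show ?thesis by simp
qed

lemma open_image_if_jacobian_nonzero:
  fixes k :: "real^'n \<Rightarrow> real^'n"
  assumes "open X" "\<forall>x\<in>X. k differentiable at x" "\<forall>x\<in>X. jacobian_det k x \<noteq> 0"
  shows "open (k ` X)"
proof -
  have contk: "continuous_on X k"
    using assms(2) by (meson continuous_at_imp_continuous_on differentiable_imp_continuous_within)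
  have "k x \<in> interior (k ` X)" if "x \<in> X" for x
  proof -
    define D where "D = frechet_derivative k (at x)"
    have derk: "(k has_derivative D) (at x)"
      using assms(2) that frechet_derivative_works by (auto simp: D_def)
    then have "linear D" using has_derivative_linear by blast
    moreover have "inj D"
      using assms(3) that \<open>linear D\<close> det_nz_iff_inj by (auto simp: jacobian_det_def D_def)
    ultimately obtain D' where "linear D'" "D \<circ> D' = id"
      using linear_injective_isomorphism[of D] by (auto simp: fun_eq_iff)
    then show ?thesis
      using sussmann_open_mapping[OF assms(1) contk that derk] \<open>open X\<close> that
      by (auto simp: linear_conv_bounded_linear interior_open)
  qed
  then show ?thesis by (metis image_subsetI interior_subset open_interior subset_antisym)
qed

lemma frontier_image_subset:
  fixes h :: "'a::topological_space \<Rightarrow> 'b::t2_space"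
  assumes "open X" "compact (closure X)" "continuous_on (closure X) h" "open (h ` X)"
  shows "frontier (h ` X) \<subseteq> h ` frontier X"
proof
  fix p assume p: "p \<in> frontier (h ` X)"
  have "compact (h ` closure X)" using assms(2,3) by (intro compact_continuous_image)
  then have "closure (h ` X) \<subseteq> h ` closure X"
    by (intro closure_minimal compact_imp_closed image_mono closure_subset)
  moreover have "p \<in> closure (h ` X)" "p \<notin> h ` X"
    using p assms(4) by (auto simp: frontier_def interior_open)
  ultimately show "p \<in> h ` frontier X"
    using assms(1) by (auto simp: frontier_def interior_open)
qed

lemma uniformly_continuous_near_compact:
  fixes \<psi> :: "'a::{heine_borel,real_normed_vector} \<Rightarrow> 'b::metric_space"
  assumes "continuous_on UNIV \<psi>" "compact C" "\<epsilon> > 0"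
  obtains \<delta> where "\<delta> > 0" "\<And>c z. c \<in> C \<Longrightarrow> dist z c < \<delta> \<Longrightarrow> dist (\<psi> z) (\<psi> c) < \<epsilon>"
proof -
  obtain A where A: "\<And>c. c \<in> C \<Longrightarrow> norm c \<le> A"
    using compact_imp_bounded[OF assms(2)] by (auto simp: bounded_iff)
  have "uniformly_continuous_on (cball 0 (A + 1)) \<psi>"
    by (rule compact_uniformly_continuous[OF continuous_on_subset[OF assms(1)] compact_cball]) auto
  then obtain d where d: "d > 0" "\<And>z c. z \<in> cball 0 (A + 1) \<Longrightarrow> c \<in> cball 0 (A + 1) \<Longrightarrow>
      dist z c < d \<Longrightarrow> dist (\<psi> z) (\<psi> c) < \<epsilon>"
    using assms(3) unfolding uniformly_continuous_on_def by metis
  show thesis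
  proof (rule that[of "min d 1"])
    fix c z assume c: "c \<in> C" and z: "dist z c < min d 1"
    have "norm z \<le> norm c + dist z c"
      using norm_triangle_ineq[of c "z - c"] by (simp add: dist_norm)
    then have "z \<in> cball 0 (A + 1)" "c \<in> cball 0 (A + 1)" using A[OF c] z by auto
    then show "dist (\<psi> z) (\<psi> c) < \<epsilon>" using z by (intro d(2)) auto
  qed (simp add: d)
qed

lemma perturbed_image_not_open:
  fixes f :: "'a::euclidean_space \<Rightarrow> 'b::euclidean_space"
  assumes "open X" "bounded X" "continuous_on UNIV \<psi>" "quasi_convex \<psi>"
    and "continuous_on (closure X) f" "\<forall>x\<in>frontier X. \<psi> (f x) \<le> r" "x0 \<in> X" "\<psi> (f x0) > r"
  obtains \<delta> where "\<delta> > 0"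
    "\<And>h. continuous_on (closure X) h \<Longrightarrow> \<forall>x\<in>closure X. dist (h x) (f x) < \<delta> \<Longrightarrow> \<not> open (h ` X)"
proof -
  define \<epsilon> where "\<epsilon> = (\<psi> (f x0) - r) / 2"
  have fx0: "\<psi> (f x0) = r + 2 * \<epsilon>" by (simp add: \<epsilon>_def field_simps)
  have cX: "compact (closure X)" using assms(2) by (simp add: compact_closure)
  obtain \<delta> where "\<delta> > 0" and \<delta>:
      "\<And>c z. c \<in> f ` closure X \<Longrightarrow> dist z c < \<delta> \<Longrightarrow> dist (\<psi> z) (\<psi> c) < \<epsilon>"
    using uniformly_continuous_near_compact[OF assms(3) compact_continuous_image[OF assms(5) cX],
        of \<epsilon>] assms(8) \<epsilon>_def by auto
  show thesis
  proof (rule that[OF \<open>\<delta> > 0\<close>] notI)+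
    fix h assume h: "continuous_on (closure X) h" "\<forall>x\<in>closure X. dist (h x) (f x) < \<delta>"
      and "open (h ` X)"
    have close: "\<bar>\<psi> (h x) - \<psi> (f x)\<bar> < \<epsilon>" if "x \<in> closure X" for x
      using \<delta>[of "f x" "h x"] h(2) that by (simp add: dist_real_def)
    have "\<psi> p < r + \<epsilon>" if p: "p \<in> frontier (h ` X)" for p
    proof -
      obtain x where "x \<in> frontier X" "p = h x"
        using frontier_image_subset[OF assms(1) cX h(1) \<open>open (h ` X)\<close>] p by blast
      moreover from this have "x \<in> closure X" by (simp add: frontier_def)
      ultimately show ?thesis using close[of x] assms(6) by (smt (verit))
    qed
    moreover have "bounded (h ` X)"
      using compact_imp_bounded[OF compact_continuous_image[OF h(1) cX]]
      by (rule bounded_subset) (intro image_mono closure_subset)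
    ultimately have "\<psi> (h x0) < r + \<epsilon>"
      using quasi_convex_less_on_frontier \<open>open (h ` X)\<close> assms(4,7) by blast
    moreover have "\<bar>\<psi> (h x0) - \<psi> (f x0)\<bar> < \<epsilon>"
      using close assms(7) closure_subset by blast
    ultimately show False using fx0 by (auto simp: abs_less_iff)
  qed
qed

lemma jacobian_vanishes_for_large_multiplier:
  fixes f g :: "real^'n \<Rightarrow> real^'n"
  assumes "open X" "bounded X" "continuous_on UNIV \<psi>" "quasi_convex \<psi>"
    and "continuous_on (closure X) f" "\<forall>x\<in>frontier X. \<psi> (f x) \<le> r" "x0 \<in> X" "\<psi> (f x0) > r"
    and "\<forall>x\<in>X. f differentiable at x"
    and "continuous_on (closure X) g" "\<forall>x\<in>X. g differentiable at x"
  shows "\<exists>lam0\<ge>0. \<forall>lam>lam0. \<exists>xh\<in>X. jacobian_det (\<lambda>y. g y + lam *\<^sub>R f y) xh = 0"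
proof -
  obtain \<delta> where "\<delta> > 0" and \<delta>: "\<And>h. continuous_on (closure X) h \<Longrightarrow>
      \<forall>x\<in>closure X. dist (h x) (f x) < \<delta> \<Longrightarrow> \<not> open (h ` X)"
    using perturbed_image_not_open[OF assms(1-8)] by blast
  have "compact (g ` closure X)"
    using assms(2,10) by (intro compact_continuous_image) (auto simp: compact_closure)
  then obtain B where "B > 0" and B: "\<forall>x\<in>closure X. norm (g x) \<le> B"
    using compact_imp_bounded bounded_pos by (metis imageI)
  have "\<exists>xh\<in>X. jacobian_det (\<lambda>y. g y + lam *\<^sub>R f y) xh = 0" if lam: "lam > B / \<delta>" for lam
  proof (rule ccontr)
    assume "\<not> (\<exists>xh\<in>X. jacobian_det (\<lambda>y. g y + lam *\<^sub>R f y) xh = 0)"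
    then have "open ((\<lambda>y. g y + lam *\<^sub>R f y) ` X)"
      using assms(9,11) by (intro open_image_if_jacobian_nonzero[OF assms(1)]) auto
    have "lam > 0" using lam \<open>B > 0\<close> \<open>\<delta> > 0\<close> by (smt (verit) divide_pos_pos)
    text \<open>Dividing by \<open>lam\<close> keeps the image open and brings the map within
      \<open>B / lam < \<delta>\<close> of \<open>f\<close>.\<close>
    define h where "h y = (1 / lam) *\<^sub>R (g y + lam *\<^sub>R f y)" for y
    have "h ` X = (\<lambda>z. (1 / lam) *\<^sub>R z) ` (\<lambda>y. g y + lam *\<^sub>R f y) ` X"
      by (simp add: h_def image_image)
    then have "open (h ` X)"
      using \<open>open ((\<lambda>y. g y + lam *\<^sub>R f y) ` X)\<close> \<open>lam > 0\<close> by (simp add: open_scaling)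
    moreover have "continuous_on (closure X) h"
      unfolding h_def using assms(5,10) by (intro continuous_intros)
    moreover have "dist (h x) (f x) < \<delta>" if "x \<in> closure X" for x
    proof -
      have "dist (h x) (f x) = norm (g x) / lam"
        using \<open>lam > 0\<close> by (simp add: h_def dist_norm algebra_simps)
      also have "\<dots> \<le> B / lam" using B that \<open>lam > 0\<close> by (simp add: divide_right_mono)
      also have "\<dots> < \<delta>" using lam \<open>lam > 0\<close> \<open>\<delta> > 0\<close> by (simp add: field_simps)
      finally show ?thesis .
    qed
    ultimately show False using \<delta> by blast
  qed
  moreover have "B / \<delta> \<ge> 0" using \<open>B > 0\<close> \<open>\<delta> > 0\<close> by simp
  ultimately show ?thesis by blast
qed

lemma Limsup_ne_SUP_imp_local_bound:
  fixes \<phi> :: "'a::metric_space \<Rightarrow> real"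
  assumes "y \<notin> \<Omega>" "Limsup (at y within \<Omega>) (\<lambda>x. ereal (\<phi> x)) \<noteq> (SUP x\<in>\<Omega>. ereal (\<phi> x))"
  obtains e c where "e > 0" "ereal c < (SUP x\<in>\<Omega>. ereal (\<phi> x))" "\<forall>x\<in>\<Omega>. dist x y < e \<longrightarrow> \<phi> x < c"
proof -
  have "Limsup (at y within \<Omega>) (\<lambda>x. ereal (\<phi> x)) \<le> (SUP x\<in>\<Omega>. ereal (\<phi> x))"
    by (intro Limsup_bounded) (auto simp: eventually_at intro!: exI[of _ 1] SUP_upper)
  with assms(2) obtain c where c: "Limsup (at y within \<Omega>) (\<lambda>x. ereal (\<phi> x)) < ereal c"
    "ereal c < (SUP x\<in>\<Omega>. ereal (\<phi> x))"
    using ereal_dense2 order_less_le by metis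
  from Limsup_lessD[OF c(1)] obtain e where "e > 0"
    "\<forall>x\<in>\<Omega>. x \<noteq> y \<and> dist x y < e \<longrightarrow> \<phi> x < c"
    by (auto simp: eventually_at)
  with c(2) assms(1) show thesis by (intro that[of e c]) auto
qed

lemma superlevel_set_closure_subset:
  fixes \<phi> :: "'a::heine_borel \<Rightarrow> real"
  assumes "\<Omega> \<noteq> {}" "bounded \<Omega>" "open \<Omega>"
    and "\<forall>y\<in>frontier \<Omega>. Limsup (at y within \<Omega>) (\<lambda>x. ereal (\<phi> x)) \<noteq> (SUP x\<in>\<Omega>. ereal (\<phi> x))"
  obtains r where "ereal r < (SUP x\<in>\<Omega>. ereal (\<phi> x))" "closure {x\<in>\<Omega>. \<phi> x > r} \<subseteq> \<Omega>"
proof -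
  have "\<exists>e c. e > 0 \<and> ereal c < (SUP x\<in>\<Omega>. ereal (\<phi> x)) \<and>
      (\<forall>x\<in>\<Omega>. dist x y < e \<longrightarrow> \<phi> x < c)" if y: "y \<in> frontier \<Omega>" for y
  proof -
    have "y \<notin> \<Omega>" using y assms(3) by (simp add: frontier_def interior_open)
    then obtain e c where "e > 0" "ereal c < (SUP x\<in>\<Omega>. ereal (\<phi> x))"
        "\<forall>x\<in>\<Omega>. dist x y < e \<longrightarrow> \<phi> x < c"
      by (rule Limsup_ne_SUP_imp_local_bound[OF _ assms(4)[rule_format, OF y]])
    then show ?thesis by blast
  qed
  then obtain E C where EC: "\<And>y. y \<in> frontier \<Omega> \<Longrightarrow> E y > 0 \<and>
      ereal (C y) < (SUP x\<in>\<Omega>. ereal (\<phi> x)) \<and> (\<forall>x\<in>\<Omega>. dist x y < E y \<longrightarrow> \<phi> x < C y)"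
    by metis
  have cover: "frontier \<Omega> \<subseteq> (\<Union>y\<in>frontier \<Omega>. ball y (E y))" using EC by force
  obtain T where T: "T \<subseteq> frontier \<Omega>" "finite T" "frontier \<Omega> \<subseteq> (\<Union>y\<in>T. ball y (E y))"
    using compactE_image[OF compact_frontier_bounded[OF assms(2)] _ cover] by (metis open_ball)
  obtain x1 where "x1 \<in> \<Omega>" using assms(1) by blast
  text \<open>The extra value \<open>\<phi> x1 - 1\<close> keeps the maximum defined when \<open>T\<close> is empty.\<close>
  define r where "r = Max (insert (\<phi> x1 - 1) (C ` T))"
  have "r \<in> insert (\<phi> x1 - 1) (C ` T)" unfolding r_def using T(2) by (intro Max_in) auto
  moreover have "ereal (\<phi> x1 - 1) < (SUP x\<in>\<Omega>. ereal (\<phi> x))"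
    using \<open>x1 \<in> \<Omega>\<close> by (auto simp: less_SUP_iff intro!: bexI[of _ x1])
  ultimately have "ereal r < (SUP x\<in>\<Omega>. ereal (\<phi> x))" using EC T(1) by blast
  moreover have "closure {x\<in>\<Omega>. \<phi> x > r} \<subseteq> \<Omega>"
  proof -
    define U where "U = (\<Union>y\<in>T. ball y (E y))"
    have "\<phi> x < r" if "x \<in> \<Omega>" "x \<in> U" for x
    proof -
      from that obtain y where "y \<in> T" "dist x y < E y" by (auto simp: U_def dist_commute)
      then have "\<phi> x < C y" using EC T(1) that(1) by blast
      also have "C y \<le> r" unfolding r_def using T(2) \<open>y \<in> T\<close> by (intro Max_ge) auto
      finally show ?thesis .
    qed
    then have "{x\<in>\<Omega>. \<phi> x > r} \<subseteq> closure \<Omega> - U" using closure_subset by fastforce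
    then have "closure {x\<in>\<Omega>. \<phi> x > r} \<subseteq> closure \<Omega> - U"
      by (intro closure_minimal closed_Diff) (auto simp: U_def)
    also have "\<dots> \<subseteq> \<Omega>" using T(3) assms(3) by (auto simp: U_def frontier_def interior_open)
    finally show ?thesis .
  qed
  ultimately show thesis by (rule that)
qed

lemma superlevel_subdomain:
  fixes \<phi> :: "'a::heine_borel \<Rightarrow> real"
  assumes "\<Omega> \<noteq> {}" "bounded \<Omega>" "open \<Omega>" "continuous_on \<Omega> \<phi>"
    and "\<forall>y\<in>frontier \<Omega>. Limsup (at y within \<Omega>) (\<lambda>x. ereal (\<phi> x)) \<noteq> (SUP x\<in>\<Omega>. ereal (\<phi> x))"
  obtains X r x0 where "open X" "bounded X" "closure X \<subseteq> \<Omega>" "\<forall>x\<in>frontier X. \<phi> x \<le> r"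
    "x0 \<in> X" "\<phi> x0 > r"
proof -
  obtain r where r: "ereal r < (SUP x\<in>\<Omega>. ereal (\<phi> x))" "closure {x\<in>\<Omega>. \<phi> x > r} \<subseteq> \<Omega>"
    using superlevel_set_closure_subset[OF assms(1-3,5)] by blast
  define X where "X = {x\<in>\<Omega>. \<phi> x > r}"
  from continuous_open_preimage[OF assms(4,3) open_greaterThan, of r]
  have "open X" by (simp add: X_def vimage_def Int_def)
  moreover have "bounded X" using assms(2) by (rule bounded_subset) (auto simp: X_def)
  moreover have "closure X \<subseteq> \<Omega>" using r(2) by (simp add: X_def)
  moreover from this have "\<forall>x\<in>frontier X. \<phi> x \<le> r"
    using \<open>open X\<close> by (auto simp: X_def frontier_def interior_open)
  moreover obtain x0 where "x0 \<in> X" using r(1) by (auto simp: X_def less_SUP_iff)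
  moreover have "\<phi> x0 > r" using \<open>x0 \<in> X\<close> by (simp add: X_def)
  ultimately show thesis by (rule that)
qed

theorem theorem3:
  fixes \<Omega> :: "(real^'n) set" and f :: "real^'n \<Rightarrow> real^'n"
  assumes "\<Omega> \<noteq> {}" and "bounded \<Omega>" and "open \<Omega>"
    and "C1_on f \<Omega>"
  shows "convex_hull_like f \<Omega> \<or>
    (\<exists>X. open X \<and> X \<noteq> {} \<and> closure X \<subseteq> \<Omega> \<and>
       (\<forall>g :: real^'n \<Rightarrow> real^'n. continuous_on \<Omega> g \<and> C1_on g X \<longrightarrow>
          (\<exists>lam0::real. lam0 \<ge> 0 \<and> (\<forall>lam>lam0. \<exists>xh\<in>X.
              jacobian_det (\<lambda>y. g y + lam *\<^sub>R f y) xh = 0))))"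
proof (cases "convex_hull_like f \<Omega>")
  case False
  then obtain \<psi> where \<psi>: "continuous_on UNIV \<psi>" "quasi_convex \<psi>" and lim:
    "\<forall>y\<in>frontier \<Omega>. Limsup (at y within \<Omega>) (\<lambda>x. ereal (\<psi> (f x))) \<noteq> (SUP x\<in>\<Omega>. ereal (\<psi> (f x)))"
    unfolding convex_hull_like_def by blast
  have df: "\<forall>x\<in>\<Omega>. f differentiable at x" using assms(4) C1_on_imp_differentiable by blast
  then have "continuous_on \<Omega> f"
    by (meson continuous_at_imp_continuous_on differentiable_imp_continuous_within)
  then have "continuous_on \<Omega> (\<lambda>x. \<psi> (f x))" using continuous_on_compose2[OF \<psi>(1)] by blast
  then obtain X r x0 where X: "open X" "bounded X" "closure X \<subseteq> \<Omega>"
      "\<forall>x\<in>frontier X. \<psi> (f x) \<le> r" "x0 \<in> X" "\<psi> (f x0) > r"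
    using superlevel_subdomain[OF assms(1-3) _ lim] by blast
  show ?thesis
  proof (intro disjI2 exI[of _ X] conjI allI impI)
    show "open X" "X \<noteq> {}" "closure X \<subseteq> \<Omega>" using X by auto
    have "X \<subseteq> \<Omega>" using X(3) closure_subset by blast
    fix g :: "real^'n \<Rightarrow> real^'n" assume "continuous_on \<Omega> g \<and> C1_on g X"
    with X df \<psi> \<open>continuous_on \<Omega> f\<close> \<open>X \<subseteq> \<Omega>\<close>
    show "\<exists>lam0\<ge>0. \<forall>lam>lam0. \<exists>xh\<in>X. jacobian_det (\<lambda>y. g y + lam *\<^sub>R f y) xh = 0"
      by (intro jacobian_vanishes_for_large_multiplier[of X \<psi> f r x0])
        (auto intro: continuous_on_subset C1_on_imp_differentiable)
  qed
qed simp

end
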